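(* Define integer matrices $(a(i,j))_{i,j\ge1}$ and $(b(i,j))_{i,j\ge1}$ as follows. The first three rows are (entries listed for $j=1,2,\dots$; all further entries in these rows are $0$): \begin{itemize} \item $a(1,\cdot)=(10,-36,27)$; $a(2,\cdot)=(-8,306,-2160,5508,-5832,2187)$; $a(3,\cdot)=(1,-360,10566,-99144,423549,-944784,1141614,-708588,177147)$; \item $b(1,\cdot)=(-9,252,-891,729)$; $b(2,\cdot)=(1,-378,8613,-54675,138510,-150903,59049)$; $b(3,\cdot)=(0,147,-14553,312255,-2617839,10764414,-23914845,29288304,-18600435,4782969)$. \end{itemize} For $i\ge4$ and $j\ge1$, both $m=a$ and $m=b$ satisfy $$m(i,j)=30m(i-1,j-1)-108m(i-1,j-2)+81m(i-1,j-3)-12m(i-2,j-1)+9m(i-2,j-2)+m(i-3,j-1),$$ with $m(i,j)=0$ whenever $j\le0$. Then for all $i,j\ge1$, $$\pi(a(i,j))\ge\left\lfloor\frac{3j-i-1}{2}\right\rfloor,\qquad \pi(b(i,j))\ge\left\lfloor\frac{3j-i}{2}\right\rfloor.$$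
   Context: For an integer $n$, $\pi(n)$ denotes the $3$-adic order of $n$, with the convention $\pi(0)=\infty$. $\lfloor x\rfloor$ is the largest integer not exceeding $x$. *)

theory Defs
  imports "HOL-Computational_Algebra.Computational_Algebra"
begin

definition rowval :: "int list \<Rightarrow> nat \<Rightarrow> int" where
  "rowval xs j = (if 1 \<le> j \<and> j \<le> length xs then xs ! (j - 1) else 0)"

text \<open>Matrix (m(i,j))_{i,j>=1} with given first three rows and the recurrence for i >= 4.
  Index 0 (row or column) is the zero entry; nat subtraction j - k for k > j lands at
  column 0, matching the convention m(i,j) = 0 for j <= 0.\<close>
fun recmat :: "int list \<Rightarrow> int list \<Rightarrow> int list \<Rightarrow> nat \<Rightarrow> nat \<Rightarrow> int" where
  "recmat r1 r2 r3 0 j = 0"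
| "recmat r1 r2 r3 (Suc 0) j = rowval r1 j"
| "recmat r1 r2 r3 (Suc (Suc 0)) j = rowval r2 j"
| "recmat r1 r2 r3 (Suc (Suc (Suc 0))) j = rowval r3 j"
| "recmat r1 r2 r3 (Suc (Suc (Suc (Suc n)))) j =
     (if j = 0 then 0 else
        30 * recmat r1 r2 r3 (Suc (Suc (Suc n))) (j - 1)
      - 108 * recmat r1 r2 r3 (Suc (Suc (Suc n))) (j - 2)
      + 81 * recmat r1 r2 r3 (Suc (Suc (Suc n))) (j - 3)
      - 12 * recmat r1 r2 r3 (Suc (Suc n)) (j - 1)
      + 9 * recmat r1 r2 r3 (Suc (Suc n)) (j - 2)
      + recmat r1 r2 r3 (Suc n) (j - 1))"

definition mat_a :: "nat \<Rightarrow> nat \<Rightarrow> int" where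
  "mat_a = recmat [10, -36, 27]
                  [-8, 306, -2160, 5508, -5832, 2187]
                  [1, -360, 10566, -99144, 423549, -944784, 1141614, -708588, 177147]"

definition mat_b :: "nat \<Rightarrow> nat \<Rightarrow> int" where
  "mat_b = recmat [-9, 252, -891, 729]
                  [1, -378, 8613, -54675, 138510, -150903, 59049]
                  [0, 147, -14553, 312255, -2617839, 10764414, -23914845, 29288304, -18600435, 4782969]"

text \<open>pi(n) >= k with the convention pi(0) = infinity.\<close>
definition pi3_ge :: "int \<Rightarrow> int \<Rightarrow> bool" where
  "pi3_ge n k = (n = 0 \<or> k \<le> int (multiplicity (3::int) n))"

end

theory Submission
  imports Defs
begin

text \<open>
  Both matrices obey the same recurrence, and the six coefficients 30, 108, 81, 12, 9, 1 have
  3-adic orders 1, 3, 4, 1, 2, 0. With \<open>E(i,j) = \<lfloor>(3j - i - c)/2\<rfloor>\<close>, the entries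
  \<open>m(i-1,j-1), m(i-1,j-2), m(i-1,j-3), m(i-2,j-1), m(i-2,j-2), m(i-3,j-1)\<close> have inductive bounds at
  least \<open>E - 1, E - 3, E - 4, E - 1, E - 2, E\<close>, so every term of the recurrence is divisible
  by \<open>3^E(i,j)\<close>. Strong induction on the row therefore reduces the theorem to a finite check
  of the bound on the three given rows, with \<open>c = 1\<close> for \<open>a\<close> and \<open>c = 0\<close> for \<open>b\<close>.
\<close>

lemma recmat_column_0: "recmat r1 r2 r3 i 0 = 0"
  by (induction r1 r2 r3 i "0::nat" rule: recmat.induct) (auto simp: rowval_def)

lemma rowval_pow_dvdI:
  fixes xs :: "int list"
  assumes "list_all (\<lambda>(k, x). p ^ nat (f k) dvd x) (zip [1..<Suc (length xs)] xs)"
  shows "p ^ nat (f j) dvd rowval xs j"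
proof (cases "1 \<le> j \<and> j \<le> length xs")
  case True
  then obtain n where n: "j = Suc n" "n < length xs"
    by (cases j) auto
  then have "zip [1..<Suc (length xs)] xs ! n = (j, xs ! n)"
    by (simp del: upt_Suc)
  with n assms show ?thesis
    by (auto simp: list_all_length rowval_def simp del: upt_Suc)
qed (auto simp: rowval_def)

lemma pow_dvd_mult_pow_dvd:
  fixes p c x :: "'a::comm_semiring_1"
  assumes "p ^ k dvd c" "p ^ nat a dvd x" "b \<le> a + int k"
  shows "p ^ nat b dvd c * x"
proof -
  have "p ^ (k + nat a) dvd c * x"
    using mult_dvd_mono[OF assms(1,2)] by (simp add: power_add)
  moreover have "nat b \<le> k + nat a"
    using assms(3) by linarith
  ultimately show ?thesis
    using power_le_dvd by blast
qed

lemma pow_dvd_shifted_column: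
  fixes M :: "nat \<Rightarrow> nat \<Rightarrow> 'a::comm_semiring_1"
  assumes "M i 0 = 0" and "p ^ nat ((3 * int (j - k) - int i - c) div 2) dvd M i (j - k)"
  shows "p ^ nat ((3 * (int j - int k) - int i - c) div 2) dvd M i (j - k)"
  using assms by (cases "k \<le> j") (simp_all add: of_nat_diff)

lemma recmat_pow3_dvd:
  fixes c :: int
  assumes row1: "\<And>j. (3::int) ^ nat ((3 * int j - 1 - c) div 2) dvd rowval r1 j"
    and row2: "\<And>j. (3::int) ^ nat ((3 * int j - 2 - c) div 2) dvd rowval r2 j"
    and row3: "\<And>j. (3::int) ^ nat ((3 * int j - 3 - c) div 2) dvd rowval r3 j"
    and "i \<ge> 1"
  shows "(3::int) ^ nat ((3 * int j - int i - c) div 2) dvd recmat r1 r2 r3 i j"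
  using \<open>i \<ge> 1\<close>
proof (induction i arbitrary: j rule: less_induct)
  case (less i)
  let ?M = "recmat r1 r2 r3"
  consider "i = 1" | "i = 2" | "i = 3" | n where "i = Suc (Suc (Suc (Suc n)))"
    using less.prems by (metis One_nat_def Suc_1 Suc_le_D numeral_3_eq_3 not0_implies_Suc le_zero_eq)
  then show ?case
  proof cases
    case 1
    then show ?thesis using row1[of j] by simp
  next
    case 2
    then show ?thesis using row2[of j] by (simp add: numeral_2_eq_2)
  next
    case 3
    then show ?thesis using row3[of j] by (simp add: numeral_3_eq_3)
  next
    case (4 n)
    show ?thesis
    proof (cases "j = 0")
      case True
      then show ?thesis by (simp add: recmat_column_0)
    next
      case False
      define E where "E = (3 * int j - int i - c) div 2"
      have IH: "(3::int) ^ nat ((3 * (int j - int k) - int i' - c) div 2) dvd ?M i' (j - k)"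
        if "i' < i" "i' \<ge> 1" for i' k
        using that by (intro pow_dvd_shifted_column recmat_column_0 less.IH)
      have recurrence: "?M i j = 30 * ?M (i - 1) (j - 1) - 108 * ?M (i - 1) (j - 2)
          + 81 * ?M (i - 1) (j - 3) - 12 * ?M (i - 2) (j - 1) + 9 * ?M (i - 2) (j - 2)
          + 1 * ?M (i - 3) (j - 1)"
        using 4 False by (simp add: numeral_2_eq_2 numeral_3_eq_3)
      have "(3::int) ^ nat E dvd 30 * ?M (i - 1) (j - 1)"
        by (rule pow_dvd_mult_pow_dvd[where k=1]) (use IH[of "i - 1" 1] 4 in \<open>auto simp: E_def\<close>)
      moreover have "(3::int) ^ nat E dvd 108 * ?M (i - 1) (j - 2)"
        by (rule pow_dvd_mult_pow_dvd[where k=3]) (use IH[of "i - 1" 2] 4 in \<open>auto simp: E_def\<close>)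
      moreover have "(3::int) ^ nat E dvd 81 * ?M (i - 1) (j - 3)"
        by (rule pow_dvd_mult_pow_dvd[where k=4]) (use IH[of "i - 1" 3] 4 in \<open>auto simp: E_def\<close>)
      moreover have "(3::int) ^ nat E dvd 12 * ?M (i - 2) (j - 1)"
        by (rule pow_dvd_mult_pow_dvd[where k=1]) (use IH[of "i - 2" 1] 4 in \<open>auto simp: E_def\<close>)
      moreover have "(3::int) ^ nat E dvd 9 * ?M (i - 2) (j - 2)"
        by (rule pow_dvd_mult_pow_dvd[where k=2]) (use IH[of "i - 2" 2] 4 in \<open>auto simp: E_def\<close>)
      moreover have "(3::int) ^ nat E dvd 1 * ?M (i - 3) (j - 1)"
        by (rule pow_dvd_mult_pow_dvd[where k=0]) (use IH[of "i - 3" 1] 4 in \<open>auto simp: E_def\<close>)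
      ultimately show ?thesis
        unfolding E_def[symmetric] recurrence by (intro dvd_add dvd_diff)
    qed
  qed
qed

lemma pi3_geI: "(3::int) ^ nat k dvd n \<Longrightarrow> pi3_ge n k"
  unfolding pi3_ge_def
proof (cases "n = 0 \<or> k \<le> 0")
  case False
  assume "(3::int) ^ nat k dvd n"
  then have "nat k \<le> multiplicity 3 n"
    using False by (intro multiplicity_geI) auto
  then show "n = 0 \<or> k \<le> int (multiplicity 3 n)"
    using False by linarith
qed auto

lemma floor_half_of_int: "\<lfloor>real_of_int x / 2\<rfloor> = x div 2"
  using floor_divide_of_int_eq[of x 2] by simp

theorem theorem3p1:
  fixes i j :: nat
  assumes "i \<ge> 1" and "j \<ge> 1"
  shows "pi3_ge (mat_a i j) \<lfloor>(3 * real j - real i - 1) / 2\<rfloor>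
       \<and> pi3_ge (mat_b i j) \<lfloor>(3 * real j - real i) / 2\<rfloor>"
proof -
  have "(3::int) ^ nat ((3 * int j - int i - 1) div 2) dvd mat_a i j"
    unfolding mat_a_def
    by (intro recmat_pow3_dvd rowval_pow_dvdI assms(1)) (simp_all add: upt_rec)
  moreover have "(3::int) ^ nat ((3 * int j - int i - 0) div 2) dvd mat_b i j"
    unfolding mat_b_def
    by (intro recmat_pow3_dvd rowval_pow_dvdI assms(1)) (simp_all add: upt_rec)
  ultimately show ?thesis
    using floor_half_of_int[of "3 * int j - int i - 1"] floor_half_of_int[of "3 * int j - int i"]
    by (simp add: pi3_geI)
qed

end
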